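(* Let $v=v_1\cdots v_n$ be a word of distinct positive integers avoiding $31425,32415,31524,32514$, with positions of left-to-right maxima $a_1<\dots<a_h$ and of right-to-left maxima $b_1<\dots<b_g$ ($a_1=1$, $a_h=b_1$, $b_g=n$). Assume $h>1$, $g>1$, $a_h>h$ and $v_{a_{h-1}}<v_{b_2}$. Then exactly one of the following holds: (A-1) $a_h=a_{h-1}+1$; (A-2) $a_h>a_{h-1}+1$ and $b_2=a_h+1$; (A-3) $a_h>a_{h-1}+1$, $b_2>a_h+1$, and $v_j>v_{a_{h-1}}$ for all $a_h<j<b_2$.
   Context: A word of distinct positive integers avoids a pattern $P$ (a permutation of $[m]$) if no subsequence of length $m$ is order-isomorphic to $P$. A left-to-right (resp. right-to-left) maximum of $v$ is a letter $v_i$ greater than all letters to its left (resp. right). *)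

theory Defs
  imports Main
begin

text \<open>Words are lists of naturals; positions are 1-indexed: letter i of v is v ! (i - 1).\<close>

definition letter :: "nat list \<Rightarrow> nat \<Rightarrow> nat" where
  "letter v i = v ! (i - 1)"

definition contains :: "nat list \<Rightarrow> nat list \<Rightarrow> bool" where
  "contains v P \<longleftrightarrow> (\<exists>idx. length idx = length P \<and> sorted_wrt (<) idx \<and>
      (\<forall>i\<in>set idx. i < length v) \<and>
      (\<forall>k<length P. \<forall>l<length P. (v ! (idx ! k) < v ! (idx ! l) \<longleftrightarrow> P ! k < P ! l)))"

definition avoids :: "nat list \<Rightarrow> nat list \<Rightarrow> bool" where
  "avoids v P \<longleftrightarrow> \<not> contains v P"

definition ltr_pos :: "nat list \<Rightarrow> nat set" where
  "ltr_pos v = {i. 1 \<le> i \<and> i \<le> length v \<and> (\<forall>j. 1 \<le> j \<and> j < i \<longrightarrow> letter v j < letter v i)}"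

definition rtl_pos :: "nat list \<Rightarrow> nat set" where
  "rtl_pos v = {i. 1 \<le> i \<and> i \<le> length v \<and> (\<forall>j. i < j \<and> j \<le> length v \<longrightarrow> letter v j < letter v i)}"

text \<open>a v k = a_k (1-indexed), the k-th smallest left-to-right maximum position; similarly b.\<close>
definition apos :: "nat list \<Rightarrow> nat \<Rightarrow> nat" where
  "apos v k = sorted_list_of_set (ltr_pos v) ! (k - 1)"

definition bpos :: "nat list \<Rightarrow> nat \<Rightarrow> nat" where
  "bpos v k = sorted_list_of_set (rtl_pos v) ! (k - 1)"

end

theory Submission
  imports Defs
begin

text \<open>Every position is dominated by a left-to-right maximum at or before it. Hence the
last left-to-right maximum a_h beats every later letter, so v(b_2) < v(a_h), and the position
a_{h-1} + 1, lying strictly between two consecutive left-to-right maxima, has a letter below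
v(a_{h-1}). So if a_h > a_{h-1} + 1 and some j with a_h < j < b_2 had v(j) < v(a_{h-1}), the
positions a_{h-1} < a_{h-1} + 1 < a_h < j < b_2 would carry an occurrence of 31524 or 32514.
The trichotomy is then a case distinction using a_{h-1} < a_h < b_2.\<close>

lemma sorted_list_of_set_nth_mem:
  assumes "finite S" "k < card S"
  shows "sorted_list_of_set S ! k \<in> S"
  using assms by (metis nth_mem length_sorted_list_of_set set_sorted_list_of_set)

lemma sorted_list_of_set_nth_less:
  assumes "finite S" "i < j" "j < card S"
  shows "sorted_list_of_set S ! i < sorted_list_of_set S ! j"
  using assms by (simp add: sorted_wrt_nth_less)

lemma le_sorted_list_of_set_last:
  assumes "finite S" "x \<in> S"
  shows "x \<le> sorted_list_of_set S ! (card S - 1)"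
proof -
  obtain i where "i < card S" "x = sorted_list_of_set S ! i"
    using assms by (metis in_set_conv_nth length_sorted_list_of_set set_sorted_list_of_set)
  then show ?thesis by (simp add: sorted_nth_mono)
qed

lemma sorted_list_of_set_nth_Suc_le:
  assumes "finite S" "Suc k < card S" "x \<in> S" "sorted_list_of_set S ! k < x"
  shows "sorted_list_of_set S ! Suc k \<le> x"
proof -
  obtain i where i: "i < card S" "x = sorted_list_of_set S ! i"
    using assms by (metis in_set_conv_nth length_sorted_list_of_set set_sorted_list_of_set)
  have "\<not> i \<le> k" using i assms(2,4) by (auto simp: sorted_nth_mono leD)
  then show ?thesis using i by (simp add: sorted_nth_mono)
qed

lemma contains_if_positions:
  assumes "length ps = length P" "sorted_wrt (<) ps" "\<forall>i\<in>set ps. 1 \<le> i \<and> i \<le> length v"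
    and "\<forall>k<length P. \<forall>l<length P. letter v (ps ! k) < letter v (ps ! l) \<longleftrightarrow> P ! k < P ! l"
  shows "contains v P"
  unfolding contains_def
proof (intro exI conjI)
  let ?idx = "map (\<lambda>i. i - 1) ps"
  show "length ?idx = length P" using assms(1) by simp
  show "sorted_wrt (<) ?idx"
    using assms(2,3) by (auto simp: sorted_wrt_map elim!: sorted_wrt_mono_rel[rotated])
  show "\<forall>i\<in>set ?idx. i < length v" using assms(3) by auto
  show "\<forall>k<length P. \<forall>l<length P. (v ! (?idx ! k) < v ! (?idx ! l)) = (P ! k < P ! l)"
    using assms(1,4) by (simp add: letter_def)
qed

lemma contains_31524_or_32514:
  assumes "1 \<le> i1" "i1 < i2" "i2 < i3" "i3 < i4" "i4 < i5" "i5 \<le> length v"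
    and "letter v i2 \<noteq> letter v i4"
    and "letter v i2 < letter v i1" "letter v i4 < letter v i1"
    and "letter v i1 < letter v i5" "letter v i5 < letter v i3"
  shows "contains v [3,1,5,2,4] \<or> contains v [3,2,5,1,4]"
proof (cases "letter v i2 < letter v i4")
  case True
  then have "contains v [3,1,5,2,4]"
    using assms by (intro contains_if_positions[where ps = "[i1,i2,i3,i4,i5]"])
      (simp_all add: less_Suc_eq all_conj_distrib numeral_eq_Suc)
  then show ?thesis ..
next
  case False
  with assms(7) have "letter v i4 < letter v i2" by simp
  then have "contains v [3,2,5,1,4]"
    using assms by (intro contains_if_positions[where ps = "[i1,i2,i3,i4,i5]"])
      (simp_all add: less_Suc_eq all_conj_distrib numeral_eq_Suc)
  then show ?thesis ..
qed

lemma finite_ltr_pos: "finite (ltr_pos v)"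
  unfolding ltr_pos_def by (rule finite_subset[of _ "{..length v}"]) auto

lemma finite_rtl_pos: "finite (rtl_pos v)"
  unfolding rtl_pos_def by (rule finite_subset[of _ "{..length v}"]) auto

lemma ltr_pos_le_rtl_pos:
  assumes "i \<in> ltr_pos v" "j \<in> rtl_pos v"
  shows "i \<le> j"
proof (rule ccontr)
  assume "\<not> i \<le> j"
  with assms have "letter v j < letter v i" and "letter v i < letter v j"
    unfolding ltr_pos_def rtl_pos_def by auto
  then show False by simp
qed

lemma letter_eq_iff:
  assumes "distinct v" "1 \<le> i" "i \<le> length v" "1 \<le> j" "j \<le> length v"
  shows "letter v i = letter v j \<longleftrightarrow> i = j"
  using assms unfolding letter_def by (auto simp: nth_eq_iff_index_eq)

lemma ltr_pos_dominates:
  assumes "1 \<le> j" "j \<le> length v"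
  shows "\<exists>m\<in>ltr_pos v. m \<le> j \<and> letter v j \<le> letter v m"
  using assms
proof (induction j rule: less_induct)
  case (less j)
  show ?case
  proof (cases "j \<in> ltr_pos v")
    case False
    with less.prems obtain q where q: "1 \<le> q" "q < j" "letter v j \<le> letter v q"
      unfolding ltr_pos_def by (auto simp: not_less)
    with less.IH[of q] less.prems obtain m where "m \<in> ltr_pos v" "m \<le> q" "letter v q \<le> letter v m"
      by auto
    with q show ?thesis by (meson le_trans less_imp_le)
  qed auto
qed

lemma letter_less_before_next_ltr_pos:
  assumes "distinct v" "a \<in> ltr_pos v" "a < p" "p \<le> length v"
    and "\<forall>m\<in>ltr_pos v. a < m \<longrightarrow> p < m"
  shows "letter v p < letter v a"
proof -
  have a: "1 \<le> a" "a \<le> length v" using assms(2) unfolding ltr_pos_def by auto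
  obtain m where m: "m \<in> ltr_pos v" "m \<le> p" "letter v p \<le> letter v m"
    using ltr_pos_dominates[of p v] a assms(3,4) by auto
  have "m \<le> a" using assms(5) m(1,2) by (meson not_le)
  then have "letter v m \<le> letter v a"
    using assms(2) m(1) unfolding ltr_pos_def by (auto simp: le_less)
  moreover have "letter v p \<noteq> letter v a"
    using letter_eq_iff[OF assms(1)] a assms(3,4) by simp
  ultimately show ?thesis using m(3) by simp
qed

lemma apos_mem: "0 < k \<Longrightarrow> k \<le> card (ltr_pos v) \<Longrightarrow> apos v k \<in> ltr_pos v"
  unfolding apos_def by (simp add: sorted_list_of_set_nth_mem finite_ltr_pos)

lemma apos_less: "0 < i \<Longrightarrow> i < j \<Longrightarrow> j \<le> card (ltr_pos v) \<Longrightarrow> apos v i < apos v j"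
  unfolding apos_def by (simp add: sorted_list_of_set_nth_less finite_ltr_pos)

lemma ltr_pos_le_apos_card: "m \<in> ltr_pos v \<Longrightarrow> m \<le> apos v (card (ltr_pos v))"
  using le_sorted_list_of_set_last[OF finite_ltr_pos] unfolding apos_def by simp

lemma apos_Suc_le:
  assumes "0 < k" "k < card (ltr_pos v)" "m \<in> ltr_pos v" "apos v k < m"
  shows "apos v (Suc k) \<le> m"
  using assms sorted_list_of_set_nth_Suc_le[OF finite_ltr_pos, of "k - 1" v m]
  unfolding apos_def by simp

lemma bpos_mem: "0 < k \<Longrightarrow> k \<le> card (rtl_pos v) \<Longrightarrow> bpos v k \<in> rtl_pos v"
  unfolding bpos_def by (simp add: sorted_list_of_set_nth_mem finite_rtl_pos)

lemma bpos_less: "0 < i \<Longrightarrow> i < j \<Longrightarrow> j \<le> card (rtl_pos v) \<Longrightarrow> bpos v i < bpos v j"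
  unfolding bpos_def by (simp add: sorted_list_of_set_nth_less finite_rtl_pos)

lemma letter_gt_in_ltr_gap:
  assumes "distinct v" "avoids v [3,1,5,2,4]" "avoids v [3,2,5,1,4]"
    and "a \<in> ltr_pos v" "a + 1 < a'" "\<forall>m\<in>ltr_pos v. a < m \<longrightarrow> a' \<le> m"
    and "a' < j" "j < b" "b \<le> length v"
    and "letter v a < letter v b" "letter v b < letter v a'"
  shows "letter v a < letter v j"
proof (rule ccontr)
  assume "\<not> letter v a < letter v j"
  have a: "1 \<le> a" using assms(4) unfolding ltr_pos_def by simp
  have "letter v j \<noteq> letter v a"
    using letter_eq_iff[OF assms(1)] a assms(5,7-9) by simp
  with \<open>\<not> letter v a < letter v j\<close> have j: "letter v j < letter v a" by simp
  have succ: "letter v (a + 1) < letter v a"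
    using assms(4-9) by (intro letter_less_before_next_ltr_pos[OF assms(1)]) auto
  have "letter v (a + 1) \<noteq> letter v j"
    using letter_eq_iff[OF assms(1)] assms(5,7-9) by simp
  then have "contains v [3,1,5,2,4] \<or> contains v [3,2,5,1,4]"
    using a assms(5,7-11) succ j by (intro contains_31524_or_32514[of a "a + 1" a' j b]) auto
  with assms(2,3) show False unfolding avoids_def by blast
qed

theorem lemma3p9:
  fixes v :: "nat list" and h g :: nat
  assumes "distinct v" and "\<forall>x\<in>set v. 0 < x"
    and "avoids v [3,1,4,2,5]" and "avoids v [3,2,4,1,5]"
    and "avoids v [3,1,5,2,4]" and "avoids v [3,2,5,1,4]"
    and "h = card (ltr_pos v)" and "g = card (rtl_pos v)"
    and "h > 1" and "g > 1" and "apos v h > h"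
    and "letter v (apos v (h - 1)) < letter v (bpos v 2)"
  shows "let A1 = (apos v h = apos v (h - 1) + 1);
             A2 = (apos v h > apos v (h - 1) + 1 \<and> bpos v 2 = apos v h + 1);
             A3 = (apos v h > apos v (h - 1) + 1 \<and> bpos v 2 > apos v h + 1 \<and>
                   (\<forall>j. apos v h < j \<and> j < bpos v 2 \<longrightarrow> letter v j > letter v (apos v (h - 1))))
         in (A1 \<and> \<not> A2 \<and> \<not> A3) \<or> (\<not> A1 \<and> A2 \<and> \<not> A3) \<or> (\<not> A1 \<and> \<not> A2 \<and> A3)"
proof -
  define a a' b where "a = apos v (h - 1)" and "a' = apos v h" and "b = bpos v 2"
  have a: "a \<in> ltr_pos v" and a': "a' \<in> ltr_pos v" and "a < a'"
    using apos_mem apos_less assms(7,9) unfolding a_def a'_def by auto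
  have next_a: "\<forall>m\<in>ltr_pos v. a < m \<longrightarrow> a' \<le> m"
    using apos_Suc_le[of "h - 1" v] assms(7,9) unfolding a_def a'_def by simp
  have max: "\<forall>m\<in>ltr_pos v. m \<le> a'"
    using ltr_pos_le_apos_card assms(7) unfolding a'_def by simp
  have b1: "bpos v 1 \<in> rtl_pos v" and "b \<in> rtl_pos v" and "bpos v 1 < b"
    using bpos_mem bpos_less assms(8,10) unfolding b_def by auto
  then have "a' < b" "b \<le> length v"
    using ltr_pos_le_rtl_pos[OF a' b1] unfolding rtl_pos_def by auto
  then have "letter v b < letter v a'"
    using letter_less_before_next_ltr_pos[OF assms(1) a'] max by (meson not_le)
  then have gap: "letter v a < letter v j" if "a + 1 < a'" "a' < j" "j < b" for j
    using letter_gt_in_ltr_gap[OF assms(1,5,6) a that(1) next_a that(2,3)] \<open>b \<le> length v\<close>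
      assms(12) unfolding a_def b_def by blast
  show ?thesis
    unfolding Let_def a_def[symmetric] a'_def[symmetric] b_def[symmetric]
    using gap \<open>a < a'\<close> \<open>a' < b\<close> by auto
qed

end
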